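(* For every $\delta>0$ and every finite set $A=\{a_1,\dots,a_m\}\subset\mathbb{R}^n$ there is $p_0(A,\delta)$ such that for every prime $p\ge p_0(A,\delta)$ there exist $N\ge n$ and a Euclidean sub-$p$-toral set $S=\{s_1,\dots,s_m\}\subset\mathbb{R}^N$ with $|a_i-s_i|<\delta$ for all $i$, where $\mathbb{R}^n\subset\mathbb{R}^N$ via the standard inclusion.
   Context: A $p$-torus is a group isomorphic to $(\mathbb{Z}_p)^\alpha$ for some $\alpha\ge1$. A set $X\subset\mathbb{R}^k$ is Euclidean sub-$p$-toral if there exist $n\ge k$, a $p$-torus $G$ and an action of $G$ on $\mathbb{R}^n$ by isometries such that $X$ (viewed in $\mathbb{R}^n$ via the standard inclusion $\mathbb{R}^k\subset\mathbb{R}^n$) is contained in a single $G$-orbit. *)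

theory Defs
  imports Complex_Main "HOL-Algebra.Group_Action" "HOL-Computational_Algebra.Primes"
begin

text \<open>Euclidean space R^k, realised as real sequences vanishing from index k on;
  the standard inclusion R^k \<subseteq> R^n (k \<le> n) is then literally set inclusion.\<close>
definition euclid :: "nat \<Rightarrow> (nat \<Rightarrow> real) set" where
  "euclid k = {x. \<forall>i\<ge>k. x i = 0}"

definition edist :: "nat \<Rightarrow> (nat \<Rightarrow> real) \<Rightarrow> (nat \<Rightarrow> real) \<Rightarrow> real" where
  "edist k x y = sqrt (\<Sum>i<k. (x i - y i)^2)"

definition Zp_power :: "nat \<Rightarrow> nat \<Rightarrow> (nat \<Rightarrow> nat) monoid" where
  "Zp_power p \<alpha> = \<lparr> carrier = {f. (\<forall>i<\<alpha>. f i < p) \<and> (\<forall>i\<ge>\<alpha>. f i = 0)},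
                     monoid.mult = (\<lambda>f g i. (f i + g i) mod p),
                     monoid.one = (\<lambda>i. 0) \<rparr>"

definition p_torus :: "nat \<Rightarrow> ('g, 'x) monoid_scheme \<Rightarrow> bool" where
  "p_torus p G \<longleftrightarrow> group G \<and> (\<exists>\<alpha>\<ge>1. G \<cong> Zp_power p \<alpha>)"

definition isometric_action :: "('g, 'x) monoid_scheme \<Rightarrow> nat \<Rightarrow> ('g \<Rightarrow> (nat \<Rightarrow> real) \<Rightarrow> (nat \<Rightarrow> real)) \<Rightarrow> bool" where
  "isometric_action G n \<phi> \<longleftrightarrow> group_action G (euclid n) \<phi> \<and>
     (\<forall>g\<in>carrier G. \<forall>x\<in>euclid n. \<forall>y\<in>euclid n. edist n (\<phi> g x) (\<phi> g y) = edist n x y)"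

text \<open>X \<subseteq> R^k is Euclidean sub-p-toral. The group type is fixed to nat \<Rightarrow> nat, which is
  no loss since every p-torus is isomorphic to a group of that type.\<close>
definition sub_p_toral :: "nat \<Rightarrow> nat \<Rightarrow> (nat \<Rightarrow> real) set \<Rightarrow> bool" where
  "sub_p_toral p k X \<longleftrightarrow> X \<subseteq> euclid k \<and>
     (\<exists>n\<ge>k. \<exists>G :: (nat \<Rightarrow> nat) monoid. \<exists>\<phi>. p_torus p G \<and> isometric_action G n \<phi> \<and>
        (\<exists>x\<in>euclid n. X \<subseteq> orbit G \<phi> x))"

end

theory Submission
  imports Defs "HOL-Analysis.L2_Norm"
begin

text \<open>Place R^n inside R^2n and let the \<open>i\<close>-th factor of \<open>(Z_p)^(n+1)\<close> rotate the
  plane of the coordinates \<open>i\<close> and \<open>n + i\<close> by multiples of \<open>2\<pi>/p\<close> about the point at height \<open>R\<close>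
  on the second axis. This is an isometric action, and the orbit of the origin consists of the points
  with coordinates \<open>R sin \<theta>\<^sub>i\<close> and \<open>R - R cos \<theta>\<^sub>i\<close>, the \<open>\<theta>\<^sub>i\<close> ranging over multiples of \<open>2\<pi>/p\<close>.
  Taking \<open>\<theta>\<^sub>i\<close> within \<open>\<pi>/p\<close> of \<open>arcsin (a\<^sub>i / R)\<close> approximates \<open>a\<^sub>i\<close> to within \<open>R\<pi>/p\<close>, while the
  new coordinate \<open>R - R cos \<theta>\<^sub>i\<close> is at most \<open>a\<^sub>i\<^sup>2/R + R\<pi>/p\<close>. Choosing first \<open>R\<close> and then \<open>p\<close> large
  makes the total error smaller than \<open>\<delta>\<close>.\<close>

lemma group_Zp_power:
  assumes "p > 0"
  shows "group (Zp_power p \<alpha>)"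
proof (rule groupI)
  fix x assume x: "x \<in> carrier (Zp_power p \<alpha>)"
  show "\<one>\<^bsub>Zp_power p \<alpha>\<^esub> \<otimes>\<^bsub>Zp_power p \<alpha>\<^esub> x = x"
  proof
    fix i show "(\<one>\<^bsub>Zp_power p \<alpha>\<^esub> \<otimes>\<^bsub>Zp_power p \<alpha>\<^esub> x) i = x i"
      using x by (cases "i < \<alpha>") (auto simp: Zp_power_def)
  qed
next
  fix x assume x: "x \<in> carrier (Zp_power p \<alpha>)"
  define y where "y i = (if i < \<alpha> then (p - x i) mod p else 0)" for i
  have "y \<in> carrier (Zp_power p \<alpha>)" using assms by (auto simp: Zp_power_def y_def)
  moreover have "y \<otimes>\<^bsub>Zp_power p \<alpha>\<^esub> x = \<one>\<^bsub>Zp_power p \<alpha>\<^esub>"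
    using x by (force simp: Zp_power_def y_def mod_add_left_eq)
  ultimately show "\<exists>y\<in>carrier (Zp_power p \<alpha>). y \<otimes>\<^bsub>Zp_power p \<alpha>\<^esub> x = \<one>\<^bsub>Zp_power p \<alpha>\<^esub>"
    by blast
qed (use assms in \<open>force simp: Zp_power_def mod_add_left_eq mod_add_right_eq add.assoc\<close>)+

lemma group_actionI:
  assumes G: "group G"
    and closed: "\<And>g x. g \<in> carrier G \<Longrightarrow> x \<in> E \<Longrightarrow> \<phi> g x \<in> E"
    and extensional: "\<And>g. g \<in> carrier G \<Longrightarrow> \<phi> g \<in> extensional E"
    and mult: "\<And>g h x. g \<in> carrier G \<Longrightarrow> h \<in> carrier G \<Longrightarrow> x \<in> E \<Longrightarrow>
                 \<phi> (g \<otimes>\<^bsub>G\<^esub> h) x = \<phi> g (\<phi> h x)"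
    and one: "\<And>x. x \<in> E \<Longrightarrow> \<phi> \<one>\<^bsub>G\<^esub> x = x"
  shows "group_action G E \<phi>"
proof -
  have Bij: "\<phi> g \<in> Bij E" if g: "g \<in> carrier G" for g
  proof -
    have "bij_betw (\<phi> g) E E"
    proof (rule bij_betwI[where g = "\<phi> (inv\<^bsub>G\<^esub> g)"])
      fix x assume x: "x \<in> E"
      show "\<phi> (inv\<^bsub>G\<^esub> g) (\<phi> g x) = x" "\<phi> g (\<phi> (inv\<^bsub>G\<^esub> g) x) = x"
        using mult[OF _ g x, of "inv\<^bsub>G\<^esub> g"] mult[OF g _ x, of "inv\<^bsub>G\<^esub> g"] one[OF x] G g
        by (simp_all add: group.l_inv group.r_inv)
    qed (use closed g G in auto)
    then show ?thesis using extensional[OF g] by (simp add: Bij_def)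
  qed
  have "\<phi> \<in> hom G (BijGroup E)"
  proof (rule homI)
    fix g h assume g: "g \<in> carrier G" and h: "h \<in> carrier G"
    have "\<phi> (g \<otimes>\<^bsub>G\<^esub> h) = compose E (\<phi> g) (\<phi> h)"
      using extensional[of "g \<otimes>\<^bsub>G\<^esub> h"] mult[OF g h] G g h
      by (intro extensionalityI[of _ E]) (auto simp: compose_def group.is_monoid monoid.m_closed)
    then show "\<phi> (g \<otimes>\<^bsub>G\<^esub> h) = \<phi> g \<otimes>\<^bsub>BijGroup E\<^esub> \<phi> h"
      using Bij[OF g] Bij[OF h] by (simp add: BijGroup_def)
  qed (use Bij in \<open>simp add: BijGroup_def\<close>)
  then show ?thesis
    unfolding group_action_def group_hom_def group_hom_axioms_def using G group_BijGroup by blast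
qed

lemma cos_add_int_2pi: "cos (x + 2 * pi * of_int m) = cos x"
  using cos_int_2pin[of m] sin_int_2pin[of m] by (simp add: cos_add mult.assoc)

lemma sin_add_int_2pi: "sin (x + 2 * pi * of_int m) = sin x"
  using cos_int_2pin[of m] sin_int_2pin[of m] by (simp add: sin_add mult.assoc)

definition root_angle :: "nat \<Rightarrow> nat \<Rightarrow> real" where
  "root_angle p k = 2 * pi * real k / real p"

lemma root_angle_add_mod:
  assumes "p > 0"
  obtains m :: int where "root_angle p ((a + b) mod p) + 2 * pi * of_int m = root_angle p a + root_angle p b"
proof
  let ?d = "(a + b) div p"
  have "root_angle p ((a + b) mod p) + 2 * pi * of_int (int ?d)
        = 2 * pi * (real ((a + b) mod p) + real p * real ?d) / p"
    using assms by (simp add: root_angle_def field_simps)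
  also have "real ((a + b) mod p) + real p * real ?d = real a + real b"
    by (metis mod_div_mult_eq of_nat_add of_nat_mult mult.commute)
  finally show "root_angle p ((a + b) mod p) + 2 * pi * of_int (int ?d) = root_angle p a + root_angle p b"
    by (simp add: root_angle_def add_divide_distrib ring_distribs)
qed

lemma
  assumes "p > 0"
  shows cos_root_angle_add_mod: "cos (root_angle p ((a + b) mod p)) = cos (root_angle p a + root_angle p b)"
    and sin_root_angle_add_mod: "sin (root_angle p ((a + b) mod p)) = sin (root_angle p a + root_angle p b)"
  using root_angle_add_mod[OF assms, of a b]
  by (metis cos_add_int_2pi sin_add_int_2pi)+

definition torus_rotation :: "nat \<Rightarrow> nat \<Rightarrow> real \<Rightarrow> (nat \<Rightarrow> nat) \<Rightarrow> (nat \<Rightarrow> real) \<Rightarrow> nat \<Rightarrow> real" where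
  "torus_rotation p n R k = (\<lambda>x \<in> euclid (2 * n). \<lambda>i.
     if i < n then cos (root_angle p (k i)) * x i - sin (root_angle p (k i)) * (x (n + i) - R)
     else if i < 2 * n then R + sin (root_angle p (k (i - n))) * x (i - n) + cos (root_angle p (k (i - n))) * (x i - R)
     else x i)"

lemma torus_rotation_in_euclid: "x \<in> euclid (2 * n) \<Longrightarrow> torus_rotation p n R k x \<in> euclid (2 * n)"
  by (auto simp: torus_rotation_def euclid_def)

lemma torus_rotation_add_mod:
  assumes "p > 0" "x \<in> euclid (2 * n)"
  shows "torus_rotation p n R (\<lambda>i. (k i + l i) mod p) x = torus_rotation p n R k (torus_rotation p n R l x)"
proof
  fix i
  consider "i < n" | j where "i = n + j" "j < n" | "2 * n \<le> i"
    by (metis add_diff_inverse_nat linorder_not_le mult_2 nat_add_left_cancel_less)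
  then show "torus_rotation p n R (\<lambda>i. (k i + l i) mod p) x i = torus_rotation p n R k (torus_rotation p n R l x) i"
    by cases (use assms torus_rotation_in_euclid[OF assms(2)] in
      \<open>simp_all add: torus_rotation_def cos_root_angle_add_mod sin_root_angle_add_mod cos_add sin_add algebra_simps\<close>)
qed

lemma torus_rotation_zero: "x \<in> euclid (2 * n) \<Longrightarrow> torus_rotation p n R (\<lambda>i. 0) x = x"
  by (auto simp: torus_rotation_def root_angle_def)

lemma rotation_sum_squares:
  fixes c s u w :: real
  assumes "c^2 + s^2 = 1"
  shows "(c * u - s * w)^2 + (s * u + c * w)^2 = u^2 + w^2"
proof -
  have "(c * u - s * w)^2 + (s * u + c * w)^2 = (c^2 + s^2) * (u^2 + w^2)" by algebra
  then show ?thesis using assms by simp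
qed

lemma sum_lessThan_add:
  "(\<Sum>i<m + (k :: nat). f i) = (\<Sum>i<m. f i) + (\<Sum>i<k. f (m + i) :: 'a :: comm_monoid_add)"
  by (induction k) (simp_all add: add.assoc)

lemma sum_lessThan_double: "(\<Sum>i<2 * (n :: nat). f i) = (\<Sum>i<n. f i + f (n + i) :: 'a :: comm_monoid_add)"
  by (simp add: mult_2 sum.distrib sum_lessThan_add)

lemma edist_torus_rotation:
  assumes "x \<in> euclid (2 * n)" "y \<in> euclid (2 * n)"
  shows "edist (2 * n) (torus_rotation p n R k x) (torus_rotation p n R k y) = edist (2 * n) x y"
proof -
  let ?f = "\<lambda>i. (torus_rotation p n R k x i - torus_rotation p n R k y i)^2"
  let ?g = "\<lambda>i. (x i - y i)^2"
  have "?f i + ?f (n + i) = ?g i + ?g (n + i)" if i: "i < n" for i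
  proof -
    let ?c = "cos (root_angle p (k i))" and ?s = "sin (root_angle p (k i))"
    have "?f i + ?f (n + i) = (?c * (x i - y i) - ?s * (x (n + i) - y (n + i)))^2
                            + (?s * (x i - y i) + ?c * (x (n + i) - y (n + i)))^2"
      using i assms by (simp add: torus_rotation_def algebra_simps)
    also have "\<dots> = ?g i + ?g (n + i)" by (rule rotation_sum_squares) simp
    finally show ?thesis .
  qed
  then show ?thesis unfolding edist_def sum_lessThan_double by simp
qed

lemma zero_in_euclid: "(\<lambda>_. 0) \<in> euclid k"
  by (simp add: euclid_def)

lemma isometric_action_torus_rotation:
  assumes "p > 0"
  shows "isometric_action (Zp_power p \<alpha>) (2 * n) (torus_rotation p n R)"
  unfolding isometric_action_def
proof (intro conjI ballI edist_torus_rotation)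
  show "group_action (Zp_power p \<alpha>) (euclid (2 * n)) (torus_rotation p n R)"
    using group_Zp_power[OF assms] torus_rotation_in_euclid torus_rotation_add_mod[OF assms]
      torus_rotation_zero
    by (intro group_actionI) (auto simp: Zp_power_def torus_rotation_def)
qed

lemma sub_p_toral_torus_orbit:
  assumes "p > 0" "\<alpha> \<ge> 1" "X \<subseteq> orbit (Zp_power p \<alpha>) (torus_rotation p n R) (\<lambda>_. 0)"
  shows "sub_p_toral p (2 * n) X"
proof -
  have "X \<subseteq> euclid (2 * n)"
    using assms(3) torus_rotation_in_euclid[OF zero_in_euclid] by (auto simp: orbit_def)
  moreover have "p_torus p (Zp_power p \<alpha>)"
    unfolding p_torus_def using group_Zp_power[OF assms(1)] assms(2) iso_refl by blast
  ultimately show ?thesis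
    unfolding sub_p_toral_def
    using isometric_action_torus_rotation[OF assms(1)] assms(3) zero_in_euclid by blast
qed

lemma torus_rotation_origin:
  "torus_rotation p n R k (\<lambda>_. 0) i =
     (if i < n then R * sin (root_angle p (k i))
      else if i < 2 * n then R - R * cos (root_angle p (k (i - n))) else 0)"
  by (simp add: torus_rotation_def zero_in_euclid)

lemma abs_sin_diff_le:
  fixes x y :: real
  shows "\<bar>sin x - sin y\<bar> \<le> \<bar>x - y\<bar>"
proof -
  have "\<bar>sin x - sin y\<bar> = 2 * \<bar>sin ((x - y) / 2)\<bar> * \<bar>cos ((x + y) / 2)\<bar>"
    by (simp add: sin_diff_sin abs_mult)
  also have "\<dots> \<le> 2 * \<bar>(x - y) / 2\<bar> * 1"
    by (intro mult_mono abs_sin_x_le_abs_x) auto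
  finally show ?thesis by simp
qed

lemma abs_cos_diff_le:
  fixes x y :: real
  shows "\<bar>cos x - cos y\<bar> \<le> \<bar>x - y\<bar>"
proof -
  have "\<bar>cos x - cos y\<bar> = 2 * \<bar>sin ((x + y) / 2)\<bar> * \<bar>sin ((y - x) / 2)\<bar>"
    by (simp add: cos_diff_cos abs_mult)
  also have "\<dots> \<le> 2 * 1 * \<bar>(y - x) / 2\<bar>"
    by (intro mult_mono abs_sin_x_le_abs_x) auto
  finally show ?thesis by simp
qed

text \<open>Round \<open>p \<theta> / 2\<pi>\<close> to the nearest integer \<open>j\<close>: the angle \<open>2\<pi>j/p\<close> is within \<open>\<pi>/p\<close> of \<open>\<theta>\<close>
  and differs from \<open>root_angle p (j mod p)\<close> by a multiple of \<open>2\<pi>\<close>.\<close>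
lemma root_angle_dense:
  assumes "p > 0"
  obtains k where "k < p" "\<bar>sin \<theta> - sin (root_angle p k)\<bar> \<le> pi / p"
    "\<bar>cos \<theta> - cos (root_angle p k)\<bar> \<le> pi / p"
proof -
  define j where "j = round (real p * \<theta> / (2 * pi))"
  define k where "k = nat (j mod int p)"
  have "k < p" using assms by (simp add: k_def nat_less_iff)
  have "j = int k + int p * (j div int p)"
    using assms by (simp add: k_def)
  then have "real_of_int j = real k + real p * of_int (j div int p)"
    by (metis of_int_add of_int_mult of_int_of_nat_eq)
  then have "2 * pi * of_int j / p = root_angle p k + 2 * pi * of_int (j div int p)"
    using assms by (simp add: root_angle_def field_simps)
  then have j: "sin (2 * pi * of_int j / p) = sin (root_angle p k)"
    "cos (2 * pi * of_int j / p) = cos (root_angle p k)"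
    by (simp_all add: sin_add_int_2pi cos_add_int_2pi)
  have "2 * pi * of_int j / p - \<theta> = (2 * pi / p) * (of_int j - p * \<theta> / (2 * pi))"
    using assms by (simp add: field_simps)
  then have "\<bar>\<theta> - 2 * pi * of_int j / p\<bar> = (2 * pi / p) * \<bar>of_int j - p * \<theta> / (2 * pi)\<bar>"
    by (metis abs_minus_commute abs_mult abs_of_nonneg pi_ge_zero divide_nonneg_nonneg
        mult_nonneg_nonneg of_nat_0_le_iff zero_le_numeral)
  also have "\<dots> \<le> (2 * pi / p) * (1 / 2)"
    unfolding j_def by (intro mult_left_mono of_int_round_abs_le) auto
  finally have "\<bar>\<theta> - 2 * pi * of_int j / p\<bar> \<le> pi / p" by simp
  then have "\<bar>sin \<theta> - sin (root_angle p k)\<bar> \<le> pi / p" "\<bar>cos \<theta> - cos (root_angle p k)\<bar> \<le> pi / p"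
    using abs_sin_diff_le[of \<theta> "2 * pi * of_int j / p"] abs_cos_diff_le[of \<theta> "2 * pi * of_int j / p"]
    unfolding j by linarith+
  with \<open>k < p\<close> show thesis by (rule that)
qed

lemma circle_point_approx:
  fixes y R :: real
  assumes "p > 0" "R > 0" "\<bar>y\<bar> \<le> R"
  obtains k where "k < p" "\<bar>y - R * sin (root_angle p k)\<bar> \<le> R * pi / p"
    "\<bar>R - R * cos (root_angle p k)\<bar> \<le> y^2 / R + R * pi / p"
proof -
  define t where "t = y / R"
  have t: "\<bar>t\<bar> \<le> 1" using assms by (simp add: t_def abs_divide)
  then have t2: "0 \<le> 1 - t^2" "1 - t^2 \<le> 1" by (auto simp: abs_square_le_1)
  define \<theta> where "\<theta> = arcsin t"
  have sin: "sin \<theta> = t" using t by (simp add: \<theta>_def abs_le_iff)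
  have "cos \<theta> = sqrt (1 - t^2)" using t by (simp add: \<theta>_def cos_arcsin abs_le_iff)
  moreover have "1 - t^2 \<le> sqrt (1 - t^2)"
    using t2 by (intro real_le_rsqrt) (simp add: power2_eq_square mult_left_le)
  ultimately have cos: "\<bar>1 - cos \<theta>\<bar> \<le> t^2" using t2 by auto
  obtain k where k: "k < p" "\<bar>sin \<theta> - sin (root_angle p k)\<bar> \<le> pi / p"
    "\<bar>cos \<theta> - cos (root_angle p k)\<bar> \<le> pi / p"
    using root_angle_dense[OF assms(1)] .
  have "\<bar>y - R * sin (root_angle p k)\<bar> = R * \<bar>sin \<theta> - sin (root_angle p k)\<bar>"
    using assms(2) by (simp add: sin t_def abs_mult field_simps flip: right_diff_distrib)
  also have "\<dots> \<le> R * pi / p" using mult_left_mono[OF k(2), of R] assms(2) by simp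
  finally have sin_bound: "\<bar>y - R * sin (root_angle p k)\<bar> \<le> R * pi / p" .
  have "\<bar>R - R * cos (root_angle p k)\<bar> = R * \<bar>(1 - cos \<theta>) + (cos \<theta> - cos (root_angle p k))\<bar>"
    using assms(2) by (simp add: abs_mult algebra_simps)
  also have "\<dots> \<le> R * (t^2 + pi / p)"
    using assms(2) cos k(3) by (intro mult_left_mono abs_triangle_ineq[THEN order_trans]) auto
  also have "\<dots> = y^2 / R + R * pi / p" using assms(2) by (simp add: t_def field_simps power2_eq_square)
  finally show thesis using k(1) sin_bound that by blast
qed

lemma edist_le_sum_abs: "edist k x y \<le> (\<Sum>i<k. \<bar>x i - y i\<bar>)"
  unfolding edist_def using L2_set_le_sum_abs[of "\<lambda>i. x i - y i" "{..<k}"] by (simp add: L2_set_def)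

lemma torus_orbit_approx:
  assumes "p > 0" "R > 0" "a \<in> euclid n" "\<And>i. i < n \<Longrightarrow> \<bar>a i\<bar> \<le> M" "M \<le> R" "n \<le> \<alpha>"
  obtains k where "k \<in> carrier (Zp_power p \<alpha>)"
    "edist (2 * n) a (torus_rotation p n R k (\<lambda>_. 0)) \<le> n * (2 * R * pi / p + M^2 / R)"
proof -
  have "\<exists>k<p. \<bar>a i - R * sin (root_angle p k)\<bar> \<le> R * pi / p \<and>
          \<bar>R - R * cos (root_angle p k)\<bar> \<le> (a i)^2 / R + R * pi / p" if "i < n" for i
    using circle_point_approx[OF assms(1,2), of "a i"] assms(4)[OF that] assms(5) by force
  then obtain K where K: "\<And>i. i < n \<Longrightarrow> K i < p \<and> \<bar>a i - R * sin (root_angle p (K i))\<bar> \<le> R * pi / p \<and>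
          \<bar>R - R * cos (root_angle p (K i))\<bar> \<le> (a i)^2 / R + R * pi / p"
    by metis
  define k where "k i = (if i < n then K i else 0)" for i
  let ?s = "torus_rotation p n R k (\<lambda>_. 0)"
  have "k \<in> carrier (Zp_power p \<alpha>)" using K assms(1,6) by (auto simp: k_def Zp_power_def)
  moreover have "\<bar>a i - ?s i\<bar> + \<bar>a (n + i) - ?s (n + i)\<bar> \<le> 2 * R * pi / p + M^2 / R"
    if i: "i < n" for i
  proof -
    have "?s i = R * sin (root_angle p (K i))" "?s (n + i) = R - R * cos (root_angle p (K i))"
      using i by (simp_all add: torus_rotation_origin k_def)
    moreover have "a (n + i) = 0" using assms(3) by (simp add: euclid_def)
    moreover have "(a i)^2 / R \<le> M^2 / R"
      using power_mono[OF assms(4)[OF i] abs_ge_zero, of 2] assms(2) by (simp add: divide_right_mono)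
    ultimately show ?thesis using K[OF i] by (simp add: abs_minus_commute)
  qed
  then have "(\<Sum>i<2 * n. \<bar>a i - ?s i\<bar>) \<le> n * (2 * R * pi / p + M^2 / R)"
    unfolding sum_lessThan_double by (metis (no_types, lifting) sum_bounded_above card_lessThan lessThan_iff)
  ultimately show thesis using edist_le_sum_abs[of "2 * n" a ?s] by (blast intro: that order_trans)
qed

lemma sub_p_toral_approximation:
  assumes "p > 0" "R > 0" "A \<subseteq> euclid n" "\<forall>a\<in>A. \<forall>i<n. \<bar>a i\<bar> \<le> M" "M \<le> R"
  obtains s where "\<forall>a\<in>A. s a \<in> euclid (2 * n) \<and> edist (2 * n) a (s a) \<le> n * (2 * R * pi / p + M^2 / R)"
    "sub_p_toral p (2 * n) (s ` A)"
proof -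
  \<comment> \<open>\<open>n + 1\<close> rather than \<open>n\<close> factors, so that the torus is nontrivial also for \<open>n = 0\<close>\<close>
  have approx: "\<forall>a\<in>A. \<exists>k. k \<in> carrier (Zp_power p (n + 1)) \<and>
           edist (2 * n) a (torus_rotation p n R k (\<lambda>_. 0)) \<le> n * (2 * R * pi / p + M^2 / R)"
  proof
    fix a assume a: "a \<in> A"
    then have "a \<in> euclid n" using assms(3) by blast
    from torus_orbit_approx[OF assms(1,2) this assms(4)[rule_format, OF a] assms(5) le_add1]
    show "\<exists>k. k \<in> carrier (Zp_power p (n + 1)) \<and>
            edist (2 * n) a (torus_rotation p n R k (\<lambda>_. 0)) \<le> n * (2 * R * pi / p + M^2 / R)"
      by blast
  qed
  obtain k where k: "\<forall>a\<in>A. k a \<in> carrier (Zp_power p (n + 1)) \<and>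
           edist (2 * n) a (torus_rotation p n R (k a) (\<lambda>_. 0)) \<le> n * (2 * R * pi / p + M^2 / R)"
    using bchoice[OF approx] by blast
  define s where "s a = torus_rotation p n R (k a) (\<lambda>_. 0)" for a
  show thesis
  proof
    show "sub_p_toral p (2 * n) (s ` A)"
      using k by (intro sub_p_toral_torus_orbit[OF assms(1), of "n + 1"]) (auto simp: s_def orbit_def)
    show "\<forall>a\<in>A. s a \<in> euclid (2 * n) \<and> edist (2 * n) a (s a) \<le> n * (2 * R * pi / p + M^2 / R)"
      using k by (simp add: s_def torus_rotation_in_euclid zero_in_euclid)
  qed
qed

lemma finite_coordinates_bounded:
  fixes A :: "(nat \<Rightarrow> real) set"
  assumes "finite A"
  obtains M :: real where "M \<ge> 0" "\<forall>a\<in>A. \<forall>i<n. \<bar>a i\<bar> \<le> M"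
proof
  show "(\<Sum>a\<in>A. \<Sum>i<n. \<bar>a i\<bar>) \<ge> 0" by (intro sum_nonneg) auto
  show "\<forall>a\<in>A. \<forall>i<n. \<bar>a i\<bar> \<le> (\<Sum>a\<in>A. \<Sum>i<n. \<bar>a i\<bar>)"
  proof (intro ballI allI impI)
    fix a i assume "a \<in> A" "i < n"
    then have "\<bar>a i\<bar> \<le> (\<Sum>i<n. \<bar>a i\<bar>)" by (intro member_le_sum) auto
    also have "\<dots> \<le> (\<Sum>a\<in>A. \<Sum>i<n. \<bar>a i\<bar>)"
      using \<open>a \<in> A\<close> assms by (intro member_le_sum[where f = "\<lambda>a. \<Sum>i<n. \<bar>a i\<bar>"]) (auto intro: sum_nonneg)
    finally show "\<bar>a i\<bar> \<le> (\<Sum>a\<in>A. \<Sum>i<n. \<bar>a i\<bar>)" .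
  qed
qed

theorem theorem5:
  fixes n :: nat and A :: "(nat \<Rightarrow> real) set" and \<delta> :: real
  assumes "\<delta> > 0" and "finite A" and "A \<subseteq> euclid n"
  shows "\<exists>p0::nat. \<forall>p. prime p \<and> p \<ge> p0 \<longrightarrow>
           (\<exists>N\<ge>n. \<exists>s :: (nat \<Rightarrow> real) \<Rightarrow> (nat \<Rightarrow> real).
              (\<forall>a\<in>A. s a \<in> euclid N \<and> edist N a (s a) < \<delta>) \<and> sub_p_toral p N (s ` A))"
proof -
  obtain M where M: "M \<ge> 0" "\<forall>a\<in>A. \<forall>i<n. \<bar>a i\<bar> \<le> M"
    using finite_coordinates_bounded[OF assms(2)] .
  define R where "R = M + 1 + 4 * n * M^2 / \<delta>"
  have "4 * n * M^2 / \<delta> \<ge> 0" using assms(1) by simp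
  then have R: "R > 0" "M \<le> R" "4 * n * M^2 / \<delta> \<le> R" using M(1) by (auto simp: R_def)
  then have "n * (M^2 / R) \<le> \<delta> / 4" using assms(1) by (simp add: field_simps)
  show ?thesis
  proof (rule exI[of _ "nat \<lceil>8 * n * pi * R / \<delta>\<rceil> + 1"], intro allI impI)
    fix p :: nat assume p: "prime p \<and> nat \<lceil>8 * n * pi * R / \<delta>\<rceil> + 1 \<le> p"
    then have "p > 0" and "nat \<lceil>8 * n * pi * R / \<delta>\<rceil> \<le> p" by linarith+
    then have "8 * n * pi * R / \<delta> \<le> p" by simp
    then have "n * (2 * R * pi / p) \<le> \<delta> / 4"
      using assms(1) \<open>p > 0\<close> by (simp add: field_simps)
    with \<open>n * (M^2 / R) \<le> \<delta> / 4\<close> have bound: "n * (2 * R * pi / p + M^2 / R) < \<delta>"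
      using assms(1) unfolding distrib_left by linarith
    obtain s where s: "\<forall>a\<in>A. s a \<in> euclid (2 * n) \<and> edist (2 * n) a (s a) \<le> n * (2 * R * pi / p + M^2 / R)"
      "sub_p_toral p (2 * n) (s ` A)"
      using sub_p_toral_approximation[OF \<open>p > 0\<close> R(1) assms(3) M(2) R(2)] .
    then have "\<forall>a\<in>A. s a \<in> euclid (2 * n) \<and> edist (2 * n) a (s a) < \<delta>"
      using bound by (meson order_le_less_trans)
    with s(2) show "\<exists>N\<ge>n. \<exists>s. (\<forall>a\<in>A. s a \<in> euclid N \<and> edist N a (s a) < \<delta>) \<and> sub_p_toral p N (s ` A)"
      by (intro exI[of _ "2 * n"] conjI exI[of _ s]) auto
  qed
qed

end
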